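(* Let $n\ge 4$ and let $D_n$ be the tree on vertex set $\{1,\ldots,n\}$ with edges $\{1,3\}$, $\{2,3\}$ and $\{i,i+1\}$ for $3\le i\le n-1$, with adjacency matrix $A$. Let $e$ be the all-ones vector of length $n$ and $W(D_n)=[e,Ae,\ldots,A^{n-1}e]$. Then $\operatorname{rank} W(D_n)=n-1$ if $4\nmid n$, and $\operatorname{rank} W(D_n)=n-2$ if $4\mid n$.
   Context: $W(D_n)$ is the walk matrix of $D_n$. *)

theory Defs
  imports "Jordan_Normal_Form.DL_Rank"
begin

definition Dn_edge :: "nat \<Rightarrow> nat \<Rightarrow> nat \<Rightarrow> bool" where
  "Dn_edge n u v \<longleftrightarrow> u \<in> {1..n} \<and> v \<in> {1..n} \<and>
     ({u, v} = {1, 3} \<or> {u, v} = {2, 3} \<or>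
      (\<exists>i. 3 \<le> i \<and> i \<le> n - 1 \<and> {u, v} = {i, i + 1}))"

text \<open>Adjacency matrix (row/column index k corresponds to vertex k+1).\<close>
definition Dn_adj :: "nat \<Rightarrow> real mat" where
  "Dn_adj n = mat n n (\<lambda>(i, j). if Dn_edge n (i + 1) (j + 1) then 1 else 0)"

definition walk_matrix :: "nat \<Rightarrow> real mat \<Rightarrow> real mat" where
  "walk_matrix n A = mat n n (\<lambda>(i, j). ((A ^\<^sub>m j) *\<^sub>v vec n (\<lambda>_. 1)) $ i)"

end

theory Submission
  imports Defs
begin

text \<open>The adjacency matrix A of D_n is symmetric. Its eigenvalues are 0, with eigenvector
  e_1 - e_2, and the n - 1 distinct numbers 2 cos t_j with t_j = (2j + 1) pi / (2(n - 1)),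
  whose eigenvectors are sine waves along the path. For an eigenvector w with eigenvalue l we
  have w . A^k e = l^k (w . e). Hence the eigenvectors orthogonal to e are orthogonal to every
  column of W(D_n), while the eigenvalues whose eigenvectors are not orthogonal to e (the main
  eigenvalues) are distinct roots of any linear relation among the first columns, read as a
  polynomial. So rank W(D_n) is the number of main eigenvalues. Telescoping the entries of the
  sine eigenvector gives 2 sin (t_j / 2) (w_j . e) = cos (t_j / 2) + (-1)^j sin (t_j / 2),
  which vanishes only if j is odd and t_j = pi / 2, that is 2j + 2 = n with 4 dividing n.\<close>

section \<open>Linear algebra\<close>

lemma (in vec_space) lin_indpt_empty: "lin_indpt {}"
  unfolding lin_dep_def by auto

lemma (in vec_space) lin_indpt_insert_orthogonal:
  assumes T: "T \<subseteq> carrier_vec n" "lin_indpt T"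
    and y: "y \<in> carrier_vec n" "y \<bullet> y \<noteq> 0"
    and orth: "\<And>x. x \<in> T \<Longrightarrow> y \<bullet> x = 0"
  shows "y \<notin> T" "lin_indpt (insert y T)"
proof -
  have "y \<in> orthogonal_complement T"
    using y orth unfolding orthogonal_complement_def by blast
  then have "y \<in> orthogonal_complement (span T)"
    using T(1) by simp
  then have "y \<notin> span T"
    using y(2) unfolding orthogonal_complement_def by blast
  then show "y \<notin> T"
    using in_own_span[OF T(1)] by blast
  with T y \<open>y \<notin> span T\<close> show "lin_indpt (insert y T)"
    using lin_dep_iff_in_span[of T y] by simp
qed

lemma (in vec_space) rank_add_card_orthogonal_le:
  assumes A: "A \<in> carrier_mat n nc"
    and Y: "finite Y" "Y \<subseteq> carrier_vec n" "\<And>y. y \<in> Y \<Longrightarrow> y \<bullet> y \<noteq> 0"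
    and pairwise: "\<And>y z. y \<in> Y \<Longrightarrow> z \<in> Y \<Longrightarrow> y \<noteq> z \<Longrightarrow> y \<bullet> z = 0"
    and cols: "\<And>y x. y \<in> Y \<Longrightarrow> x \<in> set (cols A) \<Longrightarrow> y \<bullet> x = 0"
  shows "rank A + card Y \<le> n"
proof -
  let ?indpt_cols = "\<lambda>T. T \<subseteq> set (cols A) \<and> lin_indpt T"
  obtain T where T: "finite T" "maximal T ?indpt_cols"
    using maximal_exists_superset[of "set (cols A)" ?indpt_cols "{}"] lin_indpt_empty by auto
  have TA: "T \<subseteq> set (cols A)" and "lin_indpt T"
    using T(2) unfolding maximal_def by auto
  have Tc: "T \<subseteq> carrier_vec n"
    using TA cols_dim A by blast
  have "lin_indpt (T \<union> Z) \<and> card (T \<union> Z) = card T + card Z" if "Z \<subseteq> Y" for Z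
    using finite_subset[OF that Y(1)] that
  proof (induction Z)
    case empty
    then show ?case using \<open>lin_indpt T\<close> by simp
  next
    case (insert y Z)
    have "T \<union> Z \<subseteq> carrier_vec n" "lin_indpt (T \<union> Z)"
      using Tc insert Y(2) by auto
    moreover have "y \<in> carrier_vec n" "y \<bullet> y \<noteq> 0"
      using insert.prems Y by auto
    moreover have "y \<bullet> x = 0" if "x \<in> T \<union> Z" for x
      using that insert pairwise cols TA by blast
    ultimately show ?case
      using lin_indpt_insert_orthogonal[of "T \<union> Z" y] insert T(1) by simp
  qed
  then have "lin_indpt (T \<union> Y)" "card (T \<union> Y) = card T + card Y"
    by auto
  moreover have "T \<union> Y \<subseteq> carrier_vec n" using Tc Y(2) by auto
  ultimately have "card T + card Y \<le> n"
    using li_le_dim(2)[OF fin_dim] dim_is_n by metis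
  then show ?thesis using rank_card_indpt[OF A T(2)] by simp
qed

lemma mult_mat_vec_unit_vec:
  fixes A :: "'a::semiring_1 mat"
  assumes "A \<in> carrier_mat nr nc" "j < nc"
  shows "A *\<^sub>v unit_vec nc j = col A j"
  using assms by (intro eq_vecI) (auto simp: row_def)

lemma (in vec_space) rank_ge_if_kernel_trivial:
  assumes A: "A \<in> carrier_mat n nc" and B: "B \<in> carrier_mat n r"
    and cols: "set (cols B) \<subseteq> set (cols A)"
    and ker: "\<And>v. v \<in> carrier_vec r \<Longrightarrow> B *\<^sub>v v = 0\<^sub>v n \<Longrightarrow> v = 0\<^sub>v r"
  shows "r \<le> rank A"
proof -
  have "distinct (cols B)"
  proof (rule ccontr)
    assume "\<not> distinct (cols B)"
    then obtain a b where ab: "a < r" "b < r" "a \<noteq> b" "col B a = col B b"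
      unfolding distinct_conv_nth using B by auto
    let ?v = "unit_vec r a - unit_vec r b :: 'a vec"
    have "B *\<^sub>v ?v = 0\<^sub>v n"
      using ab B by (simp add: mult_minus_distrib_mat_vec mult_mat_vec_unit_vec)
    then have "?v = 0\<^sub>v r" by (rule ker[rotated]) simp
    then have "?v $ a = 0" using ab(1) by simp
    then show False using ab by simp
  qed
  moreover have "lin_indpt (set (cols B))"
  proof
    assume "lin_dep (set (cols B))"
    then obtain v where "v \<in> carrier_vec r" "v \<noteq> 0\<^sub>v r" "B *\<^sub>v v = 0\<^sub>v n"
      using lin_depE[OF B] \<open>distinct (cols B)\<close> by blast
    then show False using ker by blast
  qed
  ultimately show ?thesis
    using rank_ge_card_indpt[OF A cols] distinct_card[of "cols B"] B by fastforce
qed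

lemma scalar_prod_mult_mat_vec:
  fixes w :: "'a::comm_semiring_0 vec"
  assumes w: "w \<in> carrier_vec n" and B: "B \<in> carrier_mat n r" and v: "v \<in> carrier_vec r"
  shows "w \<bullet> (B *\<^sub>v v) = (\<Sum>k<r. v $ k * (w \<bullet> col B k))"
proof -
  have "w \<bullet> (B *\<^sub>v v) = (transpose_mat B *\<^sub>v w) \<bullet> v"
    using transpose_vec_mult_scalar[OF B v w] by simp
  also have "\<dots> = (\<Sum>k<r. (col B k \<bullet> w) * v $ k)"
    using B v by (auto simp: scalar_prod_def[of _ v] lessThan_atLeast0 intro!: sum.cong)
  also have "\<dots> = (\<Sum>k<r. v $ k * (w \<bullet> col B k))"
    using B w by (intro sum.cong) (auto simp: comm_scalar_prod[of _ n w] mult.commute)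
  finally show ?thesis .
qed

lemma scalar_prod_self_neq_0:
  fixes y :: "real vec"
  assumes "y \<in> carrier_vec n" "y \<noteq> 0\<^sub>v n"
  shows "y \<bullet> y \<noteq> 0"
  using conjugate_square_eq_0_vec[OF assms(1)] assms(2) by simp

lemma symmetric_eigenvectors_orthogonal:
  fixes A :: "'a::idom mat"
  assumes A: "A \<in> carrier_mat n n" "transpose_mat A = A"
    and x: "x \<in> carrier_vec n" "A *\<^sub>v x = a \<cdot>\<^sub>v x"
    and y: "y \<in> carrier_vec n" "A *\<^sub>v y = b \<cdot>\<^sub>v y"
    and "a \<noteq> b"
  shows "x \<bullet> y = 0"
proof -
  have "a * (x \<bullet> y) = (A *\<^sub>v x) \<bullet> y"
    using x y by simp
  also have "\<dots> = x \<bullet> (A *\<^sub>v y)"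
    using transpose_vec_mult_scalar[OF A(1) y(1) x(1)] A(2) by simp
  also have "\<dots> = b * (x \<bullet> y)"
    using x y by simp
  finally show ?thesis using \<open>a \<noteq> b\<close> by simp
qed

lemma left_eigenvector_scalar_prod_power:
  fixes A :: "'a::comm_ring_1 mat"
  assumes A: "A \<in> carrier_mat n n" and w: "w \<in> carrier_vec n"
    and eigen: "transpose_mat A *\<^sub>v w = l \<cdot>\<^sub>v w"
  shows "x \<in> carrier_vec n \<Longrightarrow> w \<bullet> ((A ^\<^sub>m k) *\<^sub>v x) = l ^ k * (w \<bullet> x)"
proof (induction k arbitrary: x)
  case 0
  then show ?case using A by simp
next
  case (Suc k)
  have Ax: "A *\<^sub>v x \<in> carrier_vec n" using A Suc.prems by simp
  have "w \<bullet> ((A ^\<^sub>m Suc k) *\<^sub>v x) = l ^ k * (w \<bullet> (A *\<^sub>v x))"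
    using assoc_mult_mat_vec[OF pow_carrier_mat[OF A] A Suc.prems] Suc.IH[OF Ax] by simp
  also have "w \<bullet> (A *\<^sub>v x) = l * (w \<bullet> x)"
    using transpose_vec_mult_scalar[OF A Suc.prems w] eigen w Suc.prems by simp
  finally show ?case by simp
qed

lemma coeffs_eq_0_if_many_roots:
  fixes c :: "nat \<Rightarrow> 'a::idom"
  assumes X: "r \<le> card X" and roots: "\<And>x. x \<in> X \<Longrightarrow> (\<Sum>k<r. c k * x ^ k) = 0"
    and k: "k < r"
  shows "c k = 0"
proof -
  define p where "p = (\<Sum>k<r. monom (c k) k)"
  have poly_p: "poly p x = (\<Sum>k<r. c k * x ^ k)" for x
    unfolding p_def poly_sum by (simp add: poly_monom)
  have "degree p \<le> r - 1"
    unfolding p_def by (intro degree_sum_le) (auto intro: order_trans[OF degree_monom_le])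
  then have "degree p < r" using k by simp
  then have "p = 0"
    using X roots by (intro poly_eqI_degree[of X]) (auto simp: poly_p)
  then have "coeff p k = 0" by simp
  then show ?thesis
    unfolding p_def coeff_sum using k by (simp add: coeff_monom)
qed

section \<open>Rank of walk matrices\<close>

lemma walk_matrix_carrier: "walk_matrix n A \<in> carrier_mat n n"
  unfolding walk_matrix_def by simp

lemma col_walk_matrix:
  assumes "A \<in> carrier_mat n n" "j < n"
  shows "col (walk_matrix n A) j = (A ^\<^sub>m j) *\<^sub>v vec n (\<lambda>_. 1)"
  using assms unfolding walk_matrix_def by (intro eq_vecI) (auto simp del: index_mult_mat_vec)

lemma rank_walk_matrix_ge:
  fixes A :: "real mat" and w :: "'j \<Rightarrow> real vec" and l :: "'j \<Rightarrow> real"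
  assumes A: "A \<in> carrier_mat n n" and J: "card J \<le> n" "inj_on l J"
    and w: "\<And>j. j \<in> J \<Longrightarrow> w j \<in> carrier_vec n"
    and eigen: "\<And>j. j \<in> J \<Longrightarrow> transpose_mat A *\<^sub>v w j = l j \<cdot>\<^sub>v w j"
    and main: "\<And>j. j \<in> J \<Longrightarrow> w j \<bullet> vec n (\<lambda>_. 1) \<noteq> 0"
  shows "card J \<le> vec_space.rank n (walk_matrix n A)"
proof -
  interpret vec_space "TYPE(real)" n .
  let ?e = "vec n (\<lambda>_. 1::real)"
  define r where "r = card J"
  define B where "B = mat n r (\<lambda>(i, k). ((A ^\<^sub>m k) *\<^sub>v ?e) $ i)"
  have B: "B \<in> carrier_mat n r" by (simp add: B_def)
  have col_B: "col B k = (A ^\<^sub>m k) *\<^sub>v ?e" if "k < r" for k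
    using that A unfolding B_def by (intro eq_vecI) (auto simp del: index_mult_mat_vec)
  have "set (cols B) \<subseteq> set (cols (walk_matrix n A))"
  proof
    fix x assume "x \<in> set (cols B)"
    then obtain k where "k < r" "x = col B k" using B by (auto simp: in_set_conv_nth)
    moreover have "r \<le> n" using J(1) r_def by simp
    ultimately have "x = col (walk_matrix n A) k" "k < n"
      using col_B col_walk_matrix[OF A] by auto
    then show "x \<in> set (cols (walk_matrix n A))"
      by (auto simp: in_set_conv_nth walk_matrix_def)
  qed
  moreover have "v = 0\<^sub>v r" if v: "v \<in> carrier_vec r" "B *\<^sub>v v = 0\<^sub>v n" for v
  proof -
    have "(\<Sum>k<r. v $ k * x ^ k) = 0" if "x \<in> l ` J" for x
    proof -
      obtain j where j: "j \<in> J" "x = l j" using \<open>x \<in> l ` J\<close> by blast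
      have "0 = w j \<bullet> (B *\<^sub>v v)" using v w[OF j(1)] by simp
      also have "\<dots> = (\<Sum>k<r. v $ k * (x ^ k * (w j \<bullet> ?e)))"
        using scalar_prod_mult_mat_vec[OF w[OF j(1)] B v(1)] col_B j
          left_eigenvector_scalar_prod_power[OF A w eigen] by simp
      also have "\<dots> = (\<Sum>k<r. v $ k * x ^ k) * (w j \<bullet> ?e)"
        by (subst sum_distrib_right) (simp add: mult.assoc)
      finally show ?thesis using main[OF j(1)] by simp
    qed
    then have "v $ k = 0" if "k < r" for k
      using coeffs_eq_0_if_many_roots[of r "l ` J"] card_image[OF J(2)] r_def that by simp
    then show ?thesis using v(1) by (intro eq_vecI) auto
  qed
  ultimately show ?thesis
    using rank_ge_if_kernel_trivial[OF walk_matrix_carrier B] r_def by blast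
qed

lemma rank_walk_matrix_le:
  fixes A :: "real mat"
  assumes A: "A \<in> carrier_mat n n"
    and Y: "finite Y" "Y \<subseteq> carrier_vec n" "0\<^sub>v n \<notin> Y"
    and pairwise: "\<And>y z. y \<in> Y \<Longrightarrow> z \<in> Y \<Longrightarrow> y \<noteq> z \<Longrightarrow> y \<bullet> z = 0"
    and eigen: "\<And>y. y \<in> Y \<Longrightarrow> \<exists>l. transpose_mat A *\<^sub>v y = l \<cdot>\<^sub>v y"
    and orth: "\<And>y. y \<in> Y \<Longrightarrow> y \<bullet> vec n (\<lambda>_. 1) = 0"
  shows "vec_space.rank n (walk_matrix n A) + card Y \<le> n"
proof (rule vec_space.rank_add_card_orthogonal_le[OF walk_matrix_carrier Y(1,2)])
  show "y \<bullet> y \<noteq> 0" if "y \<in> Y" for y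
    using that Y scalar_prod_self_neq_0 by blast
  show "y \<bullet> x = 0" if y: "y \<in> Y" and x: "x \<in> set (cols (walk_matrix n A))" for y x
  proof -
    obtain k where "k < n" "x = (A ^\<^sub>m k) *\<^sub>v vec n (\<lambda>_. 1)"
      using x col_walk_matrix[OF A] by (auto simp: in_set_conv_nth walk_matrix_def)
    moreover obtain l where "transpose_mat A *\<^sub>v y = l \<cdot>\<^sub>v y" using eigen[OF y] by blast
    ultimately show ?thesis
      using left_eigenvector_scalar_prod_power[OF A _ _ ] orth[OF y] Y(2) y by auto
  qed
qed (use pairwise in auto)

section \<open>Eigenvectors of D_n\<close>

lemma Dn_adj_carrier: "Dn_adj n \<in> carrier_mat n n"
  unfolding Dn_adj_def by simp

lemma Dn_adj_symmetric: "transpose_mat (Dn_adj n) = Dn_adj n"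
proof -
  have "Dn_edge n u v = Dn_edge n v u" for u v
    unfolding Dn_edge_def by (auto simp: insert_commute)
  then show ?thesis by (intro eq_matI) (auto simp: Dn_adj_def)
qed

lemma Dn_edge_Suc_iff:
  assumes "i < n" "j < n"
  shows "Dn_edge n (Suc i) (Suc j) \<longleftrightarrow>
    (i \<le> 1 \<and> j = 2) \<or> (i = 2 \<and> j \<le> 1) \<or> (2 \<le> i \<and> j = i + 1) \<or> (2 \<le> j \<and> i = j + 1)"
  using assms unfolding Dn_edge_def doubleton_eq_iff
  by (auto intro: exI[of _ "Suc i"] exI[of _ "Suc j"])

lemma Dn_adj_mult_vec:
  assumes n: "n \<ge> 4" and x: "x \<in> carrier_vec n" and i: "i < n"
  shows "(Dn_adj n *\<^sub>v x) $ i =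
    (if i \<le> 1 then x $ 2 else if i = 2 then x $ 0 + x $ 1 + x $ 3
     else if i = n - 1 then x $ (n - 2) else x $ (i - 1) + x $ (i + 1))"
proof -
  let ?N = "{j \<in> {..<n}. Dn_edge n (Suc i) (Suc j)}"
  have "(Dn_adj n *\<^sub>v x) $ i = (\<Sum>j<n. if Dn_edge n (Suc i) (Suc j) then x $ j else 0)"
    using x i by (auto simp: Dn_adj_def scalar_prod_def lessThan_atLeast0 intro: sum.cong)
  also have "\<dots> = sum (($) x) ?N"
    by (rule sum.inter_filter[symmetric]) simp
  also have "?N = {j. j < n \<and> ((i \<le> 1 \<and> j = 2) \<or> (i = 2 \<and> j \<le> 1) \<or>
                        (2 \<le> i \<and> j = i + 1) \<or> (2 \<le> j \<and> i = j + 1))}"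
    using Dn_edge_Suc_iff[OF i] by blast
  also have "\<dots> = (if i \<le> 1 then {2} else if i = 2 then {0, 1, 3}
                   else if i = n - 1 then {n - 2} else {i - 1, i + 1})"
    using n i by auto
  finally show ?thesis using n by auto
qed

definition Dn_kernel_vec :: "nat \<Rightarrow> real vec" where
  "Dn_kernel_vec n = vec n (\<lambda>i. if i = 0 then 1 else if i = 1 then -1 else 0)"

text \<open>Index i \<ge> 2 carries the sine wave sin ((n - i) t), which vanishes just past the end
  of the path; the two leaves share the value sin ((n - 1) t) the wave would take at index 1.
  The rows of the leaves then impose the only condition for an eigenvector,
  cos ((n - 1) t) = 0.\<close>

definition Dn_sine_vec :: "nat \<Rightarrow> real \<Rightarrow> real vec" where
  "Dn_sine_vec n t =
     vec n (\<lambda>i. if i < 2 then sin (real (n - 1) * t) / 2 else sin (real (n - i) * t))"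

lemma Dn_kernel_vec_carrier: "Dn_kernel_vec n \<in> carrier_vec n"
  unfolding Dn_kernel_vec_def by simp

lemma Dn_sine_vec_carrier: "Dn_sine_vec n t \<in> carrier_vec n"
  unfolding Dn_sine_vec_def by simp

lemma scalar_prod_Dn_kernel_vec:
  assumes "n \<ge> 4" "x \<in> carrier_vec n"
  shows "Dn_kernel_vec n \<bullet> x = x $ 0 - x $ 1"
proof -
  have "{0..<n} = {0, 1} \<union> {2..<n}" using assms(1) by auto
  then show ?thesis
    using assms by (simp add: scalar_prod_def Dn_kernel_vec_def sum.union_disjoint)
qed

lemma Dn_kernel_vec_eigen:
  assumes n: "n \<ge> 4"
  shows "Dn_adj n *\<^sub>v Dn_kernel_vec n = 0 \<cdot>\<^sub>v Dn_kernel_vec n"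
proof (rule eq_vecI)
  fix i assume "i < dim_vec (0 \<cdot>\<^sub>v Dn_kernel_vec n)"
  then have "i < n" by (simp add: Dn_kernel_vec_def)
  then show "(Dn_adj n *\<^sub>v Dn_kernel_vec n) $ i = (0 \<cdot>\<^sub>v Dn_kernel_vec n) $ i"
    using n by (auto simp: Dn_adj_mult_vec Dn_kernel_vec_carrier Dn_kernel_vec_def)
qed (simp add: Dn_adj_def Dn_kernel_vec_def)

lemma sin_add_add_sin_diff: "sin (b + t) + sin (b - t) = 2 * cos t * sin (b::real)"
  by (simp add: sin_add sin_diff)

lemma Dn_sine_vec_eigen:
  assumes n: "n \<ge> 4" and boundary: "cos (real (n - 1) * t) = 0"
  shows "Dn_adj n *\<^sub>v Dn_sine_vec n t = (2 * cos t) \<cdot>\<^sub>v Dn_sine_vec n t"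
proof (rule eq_vecI)
  let ?s = "Dn_sine_vec n t"
  fix i assume "i < dim_vec ((2 * cos t) \<cdot>\<^sub>v ?s)"
  then have i: "i < n" by (simp add: Dn_sine_vec_def)
  have shift: "real (n - k) * t = real (n - Suc k) * t + t" if "k < n" for k
    using that by (simp add: of_nat_diff algebra_simps)
  consider "i \<le> 1" | "i = 2" | "i = n - 1" | "3 \<le> i" "i < n - 1" using i n by linarith
  then show "(Dn_adj n *\<^sub>v ?s) $ i = ((2 * cos t) \<cdot>\<^sub>v ?s) $ i"
  proof cases
    case 1
    have "real (n - 2) * t = real (n - 1) * t - t"
      using shift[of 1] n by simp
    then have "sin (real (n - 2) * t) = cos t * sin (real (n - 1) * t)"
      using boundary by (simp add: sin_diff)
    then show ?thesis
      using 1 n by (simp add: Dn_adj_mult_vec Dn_sine_vec_carrier) (simp add: Dn_sine_vec_def)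
  next
    case 2
    have "real (n - 1) * t = real (n - 2) * t + t" "real (n - 3) * t = real (n - 2) * t - t"
      using shift[of 1] shift[of 2] n by simp_all
    then have "sin (real (n - 1) * t) + sin (real (n - 3) * t) = 2 * cos t * sin (real (n - 2) * t)"
      by (simp only: sin_add_add_sin_diff)
    then show ?thesis
      using 2 n by (simp add: Dn_adj_mult_vec Dn_sine_vec_carrier) (simp add: Dn_sine_vec_def)
  next
    case 3
    have "n - (n - 2) = 2" "n - (n - 1) = 1" "n - 1 \<noteq> 2" "\<not> n - 2 < 2" using n by auto
    then show ?thesis
      using 3 n by (simp add: Dn_adj_mult_vec Dn_sine_vec_carrier) (simp add: Dn_sine_vec_def sin_double)
  next
    case 4
    have "real (n - (i - 1)) * t = real (n - i) * t + t"
      and "real (n - (i + 1)) * t = real (n - i) * t - t"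
      using shift[of "i - 1"] shift[of i] 4 by simp_all
    then have "sin (real (n - (i - 1)) * t) + sin (real (n - (i + 1)) * t) =
               2 * cos t * sin (real (n - i) * t)"
      by (simp only: sin_add_add_sin_diff)
    moreover have "\<not> i - 1 < 2" using 4 by simp
    ultimately show ?thesis
      using 4 n by (simp add: Dn_adj_mult_vec Dn_sine_vec_carrier) (simp add: Dn_sine_vec_def)
  qed
qed (simp add: Dn_adj_def Dn_sine_vec_def)

definition Dn_angle :: "nat \<Rightarrow> nat \<Rightarrow> real" where
  "Dn_angle n j = real (2 * j + 1) * pi / (2 * real (n - 1))"

lemma Dn_angle_bounds:
  assumes "j < n - 1"
  shows "0 < Dn_angle n j" "Dn_angle n j < pi"
proof -
  have pos: "real (n - 1) > 0" using assms by simp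
  then show "0 < Dn_angle n j" unfolding Dn_angle_def by simp
  have "real (2 * j + 1) < 2 * real (n - 1)" using assms by linarith
  then have "real (2 * j + 1) * pi < 2 * real (n - 1) * pi" by simp
  then show "Dn_angle n j < pi" unfolding Dn_angle_def using pos by (simp add: divide_less_eq)
qed

lemma Dn_angle_times:
  assumes "n \<ge> 2"
  shows "real (n - 1) * Dn_angle n j = real (Suc (2 * j)) * pi / 2"
  using assms unfolding Dn_angle_def by (simp add: field_simps)

lemma cos_times_Dn_angle: "n \<ge> 2 \<Longrightarrow> cos (real (n - 1) * Dn_angle n j) = 0"
  unfolding Dn_angle_times using cos_pi_eq_zero[of j] by (simp add: mult.commute)

lemma sin_times_Dn_angle: "n \<ge> 2 \<Longrightarrow> sin (real (n - 1) * Dn_angle n j) = (-1) ^ j"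
  by (simp only: Dn_angle_times sin_cos_npi)

lemma Dn_angle_eq_iff:
  assumes "n \<ge> 2"
  shows "Dn_angle n j = Dn_angle n k \<longleftrightarrow> j = k"
proof -
  have "real (n - 1) \<noteq> 0" using assms by simp
  then show ?thesis unfolding Dn_angle_def by (simp add: divide_cancel_right)
qed

lemma Dn_angle_eq_pi_half_iff:
  assumes "n \<ge> 2"
  shows "Dn_angle n j = pi / 2 \<longleftrightarrow> 2 * j + 2 = n"
proof -
  have "2 * real (n - 1) \<noteq> 0" using assms by simp
  then show ?thesis
    using assms unfolding Dn_angle_def by (auto simp: divide_eq_eq of_nat_diff)
qed

lemma inj_on_cos_Dn_angle: "inj_on (\<lambda>j. cos (Dn_angle n j)) {..<n - 1}"
proof (rule inj_onI)
  fix j k assume j: "j \<in> {..<n - 1}" and k: "k \<in> {..<n - 1}"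
    and cos_eq: "cos (Dn_angle n j) = cos (Dn_angle n k)"
  have "Dn_angle n j = Dn_angle n k"
    using Dn_angle_bounds[of j n] Dn_angle_bounds[of k n] j k
    by (intro cos_inj_pi[OF _ _ _ _ cos_eq]) (simp_all add: less_imp_le)
  moreover have "n \<ge> 2" using j by simp
  ultimately show "j = k" using Dn_angle_eq_iff by blast
qed

lemma Dn_sine_vec_Dn_angle_eigen:
  assumes "n \<ge> 4"
  shows "Dn_adj n *\<^sub>v Dn_sine_vec n (Dn_angle n j) =
           (2 * cos (Dn_angle n j)) \<cdot>\<^sub>v Dn_sine_vec n (Dn_angle n j)"
  using assms by (intro Dn_sine_vec_eigen cos_times_Dn_angle) simp_all

lemma Dn_sine_vec_Dn_angle_nonzero:
  assumes "n \<ge> 4" "j < n - 1"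
  shows "Dn_sine_vec n (Dn_angle n j) \<noteq> 0\<^sub>v n"
proof -
  have "Dn_sine_vec n (Dn_angle n j) $ (n - 1) = sin (Dn_angle n j)"
    using assms(1) by (simp add: Dn_sine_vec_def)
  moreover have "sin (Dn_angle n j) > 0"
    using Dn_angle_bounds[OF assms(2)] by (intro sin_gt_zero)
  ultimately show ?thesis using assms(1) by auto
qed

lemma Dn_kernel_vec_scalar_prods:
  assumes "n \<ge> 4"
  shows "Dn_kernel_vec n \<bullet> Dn_kernel_vec n = 2"
    and "Dn_kernel_vec n \<bullet> vec n (\<lambda>_. 1) = 0"
    and "Dn_kernel_vec n \<bullet> Dn_sine_vec n t = 0"
  using assms by (simp_all add: scalar_prod_Dn_kernel_vec Dn_kernel_vec_carrier Dn_sine_vec_carrier)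
    (simp_all add: Dn_kernel_vec_def Dn_sine_vec_def)

lemma Dn_sine_vecs_orthogonal:
  assumes n: "n \<ge> 4" and jk: "j < n - 1" "k < n - 1" "j \<noteq> k"
  shows "Dn_sine_vec n (Dn_angle n j) \<bullet> Dn_sine_vec n (Dn_angle n k) = 0"
proof (rule symmetric_eigenvectors_orthogonal[OF Dn_adj_carrier[of n] Dn_adj_symmetric])
  show "2 * cos (Dn_angle n j) \<noteq> 2 * cos (Dn_angle n k)"
    using inj_on_cos_Dn_angle[of n] jk by (auto dest: inj_onD)
qed (use n in \<open>simp_all add: Dn_sine_vec_carrier Dn_sine_vec_Dn_angle_eigen\<close>)

section \<open>Main eigenvalues of D_n\<close>

lemma sin_half_times_sum_sin:
  fixes t :: real
  shows "2 * sin (t / 2) * (\<Sum>k=1..N. sin (real k * t)) = cos (t / 2) - cos ((real N + 1 / 2) * t)"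
proof (induction N)
  case 0
  then show ?case by simp
next
  case (Suc N)
  have "(real N + 1 / 2) * t = real (Suc N) * t - t / 2"
    and "(real (Suc N) + 1 / 2) * t = real (Suc N) * t + t / 2"
    by (simp_all add: algebra_simps)
  then have "2 * sin (t / 2) * sin (real (Suc N) * t) =
             cos ((real N + 1 / 2) * t) - cos ((real (Suc N) + 1 / 2) * t)"
    by (simp only: cos_add cos_diff) simp
  then show ?case using Suc by (simp add: algebra_simps)
qed

lemma scalar_prod_Dn_sine_vec_ones:
  assumes n: "n \<ge> 4"
  shows "Dn_sine_vec n t \<bullet> vec n (\<lambda>_. 1) = (\<Sum>k=1..n-1. sin (real k * t))"
proof -
  let ?s = "Dn_sine_vec n t"
  have "?s \<bullet> vec n (\<lambda>_. 1) = (\<Sum>i\<in>{0..<n}. ?s $ i)"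
    by (simp add: scalar_prod_def)
  also have "{0..<n} = {0, 1} \<union> {2..<n}"
    using n by auto
  also have "(\<Sum>i\<in>{0, 1} \<union> {2..<n}. ?s $ i) = ?s $ 0 + ?s $ 1 + (\<Sum>i=2..<n. ?s $ i)"
    by (subst sum.union_disjoint) auto
  also have "?s $ 0 + ?s $ 1 = sin (real (n - 1) * t)"
    using n by (simp add: Dn_sine_vec_def)
  also have "(\<Sum>i=2..<n. ?s $ i) = (\<Sum>i=2..<n. sin (real (n - i) * t))"
    by (intro sum.cong) (auto simp: Dn_sine_vec_def)
  also have "\<dots> = (\<Sum>k=1..n-2. sin (real k * t))"
    by (rule sum.reindex_bij_witness[of _ "\<lambda>k. n - k" "\<lambda>i. n - i"]) auto
  also have "sin (real (n - 1) * t) + (\<Sum>k=1..n-2. sin (real k * t)) = (\<Sum>k=1..n-1. sin (real k * t))"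
  proof -
    have "n - 1 = Suc (n - 2)" using n by simp
    then show ?thesis by (simp add: add.commute)
  qed
  finally show ?thesis .
qed

lemma sin_half_times_Dn_sine_vec_ones:
  fixes n j :: nat
  assumes n: "n \<ge> 4"
  defines "t \<equiv> Dn_angle n j"
  shows "2 * sin (t / 2) * (Dn_sine_vec n t \<bullet> vec n (\<lambda>_. 1)) = cos (t / 2) + (-1) ^ j * sin (t / 2)"
proof -
  have "2 * sin (t / 2) * (Dn_sine_vec n t \<bullet> vec n (\<lambda>_. 1)) =
        cos (t / 2) - cos ((real (n - 1) + 1 / 2) * t)"
    unfolding scalar_prod_Dn_sine_vec_ones[OF n] sin_half_times_sum_sin ..
  also have "(real (n - 1) + 1 / 2) * t = real (n - 1) * t + t / 2"
    by (simp add: algebra_simps)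
  also have "cos (real (n - 1) * t + t / 2) = - ((-1) ^ j * sin (t / 2))"
    using n cos_times_Dn_angle[of n j] sin_times_Dn_angle[of n j] unfolding cos_add t_def by simp
  finally show ?thesis by simp
qed

lemma Dn_sine_vec_ones_eq_0_iff:
  assumes n: "n \<ge> 4" and j: "j < n - 1"
  shows "Dn_sine_vec n (Dn_angle n j) \<bullet> vec n (\<lambda>_. 1) = 0 \<longleftrightarrow> 4 dvd n \<and> 2 * j + 2 = n"
proof -
  let ?t = "Dn_angle n j"
  have cos_pos: "cos (?t / 2) > 0" and sin_pos: "sin (?t / 2) > 0"
    using Dn_angle_bounds[OF j] by (auto intro!: cos_gt_zero sin_gt_zero)
  then have "Dn_sine_vec n ?t \<bullet> vec n (\<lambda>_. 1) = 0 \<longleftrightarrow> cos (?t / 2) + (-1) ^ j * sin (?t / 2) = 0"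
    using sin_half_times_Dn_sine_vec_ones[OF n, of j] by auto
  also have "\<dots> \<longleftrightarrow> odd j \<and> cos (?t / 2) = sin (?t / 2)"
  proof (cases "even j")
    case True
    then show ?thesis using cos_pos sin_pos by simp
  next
    case False
    then show ?thesis by simp
  qed
  also have "cos (?t / 2) = sin (?t / 2) \<longleftrightarrow> ?t = pi / 2"
  proof
    assume "cos (?t / 2) = sin (?t / 2)"
    then have "cos ?t = cos (pi / 2)"
      using cos_double[of "?t / 2"] by simp
    moreover have "0 \<le> ?t" "?t \<le> pi"
      using Dn_angle_bounds[OF j] by simp_all
    ultimately show "?t = pi / 2"
      using cos_inj_pi[of ?t "pi / 2"] by simp
  next
    assume "?t = pi / 2"
    then have "?t / 2 = pi / 4" by simp
    then show "cos (?t / 2) = sin (?t / 2)" by (simp only: cos_45 sin_45)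
  qed
  also have "?t = pi / 2 \<longleftrightarrow> 2 * j + 2 = n"
    using n by (intro Dn_angle_eq_pi_half_iff) simp
  also have "odd j \<and> 2 * j + 2 = n \<longleftrightarrow> 4 dvd n \<and> 2 * j + 2 = n"
    by presburger
  finally show ?thesis .
qed

text \<open>Index j stands for the eigenvalue 2 cos (Dn_angle n j); it is main when its eigenvector
  is not orthogonal to the all-ones vector.\<close>

definition Dn_main_indices :: "nat \<Rightarrow> nat set" where
  "Dn_main_indices n = {j. j < n - 1 \<and> Dn_sine_vec n (Dn_angle n j) \<bullet> vec n (\<lambda>_. 1) \<noteq> 0}"

lemma card_Dn_main_indices:
  assumes n: "n \<ge> 4"
  shows "card (Dn_main_indices n) = (if 4 dvd n then n - 2 else n - 1)"
proof -
  have main: "Dn_main_indices n = {..<n - 1} - {j. 4 dvd n \<and> 2 * j + 2 = n}"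
    using Dn_sine_vec_ones_eq_0_iff[OF n] unfolding Dn_main_indices_def by auto
  show ?thesis
  proof (cases "4 dvd n")
    case True
    then have "{j. 4 dvd n \<and> 2 * j + 2 = n} = {n div 2 - 1}"
      using n by (auto; presburger)
    moreover have "n div 2 - 1 \<in> {..<n - 1}" using n by auto
    ultimately show ?thesis using main True by (simp add: card_Diff_singleton)
  next
    case False
    then show ?thesis using main by simp
  qed
qed

lemma rank_walk_matrix_Dn_ge:
  assumes n: "n \<ge> 4"
  shows "card (Dn_main_indices n) \<le> vec_space.rank n (walk_matrix n (Dn_adj n))"
proof (rule rank_walk_matrix_ge[OF Dn_adj_carrier])
  show "card (Dn_main_indices n) \<le> n"
    using card_Dn_main_indices[OF n] by simp
  show "inj_on (\<lambda>j. 2 * cos (Dn_angle n j)) (Dn_main_indices n)"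
    using inj_on_cos_Dn_angle[of n] unfolding inj_on_def Dn_main_indices_def by auto
qed (use n in \<open>auto simp: Dn_main_indices_def Dn_sine_vec_carrier Dn_adj_symmetric
                          Dn_sine_vec_Dn_angle_eigen\<close>)

definition Dn_eigenvectors :: "nat \<Rightarrow> nat set \<Rightarrow> real vec set" where
  "Dn_eigenvectors n N = insert (Dn_kernel_vec n) ((\<lambda>j. Dn_sine_vec n (Dn_angle n j)) ` N)"

lemma Dn_eigenvectors_carrier: "Dn_eigenvectors n N \<subseteq> carrier_vec n"
  unfolding Dn_eigenvectors_def by (auto simp: Dn_kernel_vec_carrier Dn_sine_vec_carrier)

lemma Dn_eigenvectors_eigen:
  assumes "n \<ge> 4" "y \<in> Dn_eigenvectors n N"
  shows "\<exists>l. Dn_adj n *\<^sub>v y = l \<cdot>\<^sub>v y"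
  using assms Dn_kernel_vec_eigen Dn_sine_vec_Dn_angle_eigen
  unfolding Dn_eigenvectors_def by blast

lemma Dn_eigenvectors_self:
  assumes n: "n \<ge> 4" and N: "N \<subseteq> {..<n - 1}" and y: "y \<in> Dn_eigenvectors n N"
  shows "y \<bullet> y \<noteq> 0"
  using y N Dn_kernel_vec_scalar_prods(1)[OF n]
    scalar_prod_self_neq_0[OF Dn_sine_vec_carrier Dn_sine_vec_Dn_angle_nonzero[OF n]]
  unfolding Dn_eigenvectors_def by auto

lemma Dn_eigenvectors_orthogonal:
  assumes n: "n \<ge> 4" and N: "N \<subseteq> {..<n - 1}"
    and yz: "y \<in> Dn_eigenvectors n N" "z \<in> Dn_eigenvectors n N" "y \<noteq> z"
  shows "y \<bullet> z = 0"
proof -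
  let ?w = "\<lambda>j. Dn_sine_vec n (Dn_angle n j)"
  consider "y = Dn_kernel_vec n" "z \<in> ?w ` N" | "y \<in> ?w ` N" "z = Dn_kernel_vec n"
    | j k where "j \<in> N" "k \<in> N" "y = ?w j" "z = ?w k"
    using yz unfolding Dn_eigenvectors_def by blast
  then show ?thesis
  proof cases
    case 1
    then show ?thesis using Dn_kernel_vec_scalar_prods(3)[OF n] by auto
  next
    case 2
    then show ?thesis
      using Dn_kernel_vec_scalar_prods(3)[OF n]
        comm_scalar_prod[OF Dn_kernel_vec_carrier Dn_sine_vec_carrier]
      by auto
  next
    case 3
    then show ?thesis using N yz(3) Dn_sine_vecs_orthogonal[OF n] by blast
  qed
qed

lemma card_Dn_eigenvectors:
  assumes n: "n \<ge> 4" and N: "N \<subseteq> {..<n - 1}"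
  shows "card (Dn_eigenvectors n N) = Suc (card N)"
proof -
  let ?w = "\<lambda>j. Dn_sine_vec n (Dn_angle n j)"
  have "inj_on ?w N"
  proof (rule inj_onI, rule ccontr)
    fix j k assume jk: "j \<in> N" "k \<in> N" "?w j = ?w k" "j \<noteq> k"
    then have "?w j \<bullet> ?w j = 0"
      using N by (metis Dn_sine_vecs_orthogonal[OF n] lessThan_iff subsetD)
    moreover have "?w j \<in> Dn_eigenvectors n N" using jk unfolding Dn_eigenvectors_def by blast
    ultimately show False using Dn_eigenvectors_self[OF n N] by blast
  qed
  moreover have "Dn_kernel_vec n \<notin> ?w ` N"
  proof
    assume "Dn_kernel_vec n \<in> ?w ` N"
    then have "Dn_kernel_vec n \<bullet> Dn_kernel_vec n = 0"
      using Dn_kernel_vec_scalar_prods(3)[OF n] by auto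
    then show False using Dn_kernel_vec_scalar_prods(1)[OF n] by simp
  qed
  moreover have "finite N" using N finite_subset by blast
  ultimately show ?thesis unfolding Dn_eigenvectors_def by (simp add: card_image)
qed

lemma rank_walk_matrix_Dn_le:
  assumes n: "n \<ge> 4"
  shows "vec_space.rank n (walk_matrix n (Dn_adj n)) \<le> card (Dn_main_indices n)"
proof -
  define N where "N = {..<n - 1} - Dn_main_indices n"
  have N: "N \<subseteq> {..<n - 1}" unfolding N_def by blast
  have "Dn_main_indices n \<subseteq> {..<n - 1}"
    unfolding Dn_main_indices_def by blast
  then have "card N = n - 1 - card (Dn_main_indices n)"
    unfolding N_def by (simp add: card_Diff_subset finite_subset)
  then have card: "card (Dn_eigenvectors n N) = n - card (Dn_main_indices n)"
    using card_Dn_eigenvectors[OF n N] card_Dn_main_indices[OF n] n by (simp split: if_splits)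
  have "vec_space.rank n (walk_matrix n (Dn_adj n)) + card (Dn_eigenvectors n N) \<le> n"
  proof (rule rank_walk_matrix_le[OF Dn_adj_carrier])
    show "finite (Dn_eigenvectors n N)"
      using N finite_subset unfolding Dn_eigenvectors_def by blast
    show "0\<^sub>v n \<notin> Dn_eigenvectors n N"
      using Dn_eigenvectors_self[OF n N, of "0\<^sub>v n"] by auto
    show "y \<bullet> vec n (\<lambda>_. 1) = 0" if "y \<in> Dn_eigenvectors n N" for y
      using that Dn_kernel_vec_scalar_prods(2)[OF n]
      unfolding Dn_eigenvectors_def N_def Dn_main_indices_def by auto
  qed (use Dn_eigenvectors_carrier Dn_eigenvectors_orthogonal[OF n N]
         Dn_eigenvectors_eigen[OF n] Dn_adj_symmetric in auto)
  then show ?thesis using card by simp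
qed

lemma rank_walk_matrix_Dn:
  assumes "n \<ge> 4"
  shows "vec_space.rank n (walk_matrix n (Dn_adj n)) = card (Dn_main_indices n)"
  using rank_walk_matrix_Dn_ge[OF assms] rank_walk_matrix_Dn_le[OF assms] by simp

theorem mainTheorem2:
  fixes n :: nat
  assumes "n \<ge> 4"
  shows "vec_space.rank n (walk_matrix n (Dn_adj n)) =
           (if 4 dvd n then n - 2 else n - 1)"
  using rank_walk_matrix_Dn[OF assms] card_Dn_main_indices[OF assms] by simp

end
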